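(* For every integer $n\ge 2$, the coordinator polynomial $h_{D_n}(x)$ of the root lattice $D_n$ is real-rooted, i.e. all of its complex zeros are real.
   Context: Let $\mathcal{L}$ be a lattice (a discrete subgroup of a finite-dimensional real Euclidean space) of rank $d$, generated as a monoid by a finite set $M$, i.e. every vector of $\mathcal{L}$ is a nonnegative integer linear combination of elements of $M$. For $v\in\mathcal{L}$ define its length $\ell(v)=\min\{\sum_{m\in M}c_m : v=\sum_{m\in M}c_m m,\ c_m\in\mathbb{Z}_{\ge0}\}$, and let $S(k)$ be the number of $v\in\mathcal{L}$ with $\ell(v)=k$. Then $\sum_{k\ge0}S(k)x^k=h(x)/(1-x)^d$ for a polynomial $h(x)$ of degree at most $d$, called the coordinator polynomial of $\mathcal{L}$ with respect to $M$. The root lattice $D_n$ is the lattice in $\mathbb{R}^n$ generated as a monoid by $M_{D_n}=\{\pm e_i\pm e_j : 1\le i<j\le n\}$, where $e_i$ are the standard basis vectors; $h_{D_n}(x)$ denotes its coordinator polynomial with respect to $M_{D_n}$. (It is known that $h_{D_n}(x)=\frac{(1+\sqrt{x})^{2n}+(1-\sqrt{x})^{2n}}{2}-2nx(1+x)^{n-2}$.) *)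

theory Defs
  imports Complex_Main "HOL-Computational_Algebra.Computational_Algebra"
begin

text \<open>Vectors of the lattice are represented as integer-valued functions
  on the coordinate indices (only coordinates below n are used).\<close>

type_synonym vec = "nat \<Rightarrow> int"

definition represents :: "vec set \<Rightarrow> vec \<Rightarrow> nat \<Rightarrow> bool" where
  "represents M v k \<longleftrightarrow> (\<exists>c :: vec \<Rightarrow> nat.
      v = (\<lambda>i. \<Sum>m\<in>M. int (c m) * m i) \<and> (\<Sum>m\<in>M. c m) = k)"

definition gen_lattice :: "vec set \<Rightarrow> vec set" where
  "gen_lattice M = {v. \<exists>k. represents M v k}"

definition word_length :: "vec set \<Rightarrow> vec \<Rightarrow> nat" where
  "word_length M v = (LEAST k. represents M v k)"

definition coord_seq :: "vec set \<Rightarrow> nat \<Rightarrow> nat" where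
  "coord_seq M k = card {v \<in> gen_lattice M. word_length M v = k}"

text \<open>Coordinator polynomial: the polynomial h with
  sum_k S(k) x^k = h(x) / (1-x)^d, i.e. h = (1-x)^d * sum_k S(k) x^k.\<close>
definition coordinator_poly :: "vec set \<Rightarrow> nat \<Rightarrow> real poly" where
  "coordinator_poly M d =
     (THE h. fps_of_poly h = (1 - fps_X) ^ d * Abs_fps (\<lambda>k. real (coord_seq M k)))"

definition M_D :: "nat \<Rightarrow> vec set" where
  "M_D n = {v. \<exists>i j (s::int) (t::int). i < j \<and> j < n \<and> s \<in> {1, -1} \<and> t \<in> {1, -1} \<and>
      v = (\<lambda>k. if k = i then s else if k = j then t else 0)}"

definition h_D :: "nat \<Rightarrow> real poly" where
  "h_D n = coordinator_poly (M_D n) n"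

definition real_rooted :: "real poly \<Rightarrow> bool" where
  "real_rooted p \<longleftrightarrow> (\<forall>z::complex. poly (map_poly complex_of_real p) z = 0 \<longrightarrow> z \<in> \<real>)"

end

theory Submission
  imports Defs "HOL-Combinatorics.Transposition"
begin

text \<open>
  Counting: a vector of \<open>\<int>\<^sup>n\<close> lies in the \<open>D\<^sub>n\<close>-ball of radius \<open>k\<close> iff its \<open>l\<^sub>1\<close>-norm is even and at most
  \<open>2k\<close> and all its coordinates are at most \<open>k\<close> in absolute value (a greedy argument). Since at most one
  coordinate can exceed \<open>k\<close>, the ball sizes are expressed through the numbers of vectors of \<open>l\<^sub>1\<close>-norm at
  most \<open>m\<close> and of the parity of \<open>m\<close>, whose generating function is \<open>(1+x)\<^sup>n / ((1-x)\<^sup>n (1-x\<^sup>2))\<close>.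
  Taking even parts yields \<open>h(x) = A(x) - 2nx(1+x)\<^sup>n\<^sup>-\<^sup>2\<close> with \<open>A(x) = \<Sum>\<^sub>k (2n choose 2k) x\<^sup>k\<close>.

  Real roots: substituting \<open>x = -tan\<^sup>2 \<theta>\<close> gives
  \<open>cos\<^sup>2\<^sup>n \<theta> \<cdot> h(x) = cos (n\<phi>) + (n/2) sin\<^sup>2 \<phi> cos\<^sup>n\<^sup>-\<^sup>2 \<phi>\<close> with \<open>\<phi> = 2\<theta>\<close>. For \<open>n \<ge> 3\<close> the second
  summand has absolute value less than 1, so the right-hand side alternates in sign at \<open>\<phi> = j\<pi>/n\<close>,
  which yields \<open>n\<close> distinct negative roots of a polynomial of degree at most \<open>n\<close>.
\<close>

section \<open>The closed form and its real roots\<close>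

text \<open>\<open>even_binom_poly n = \<Sum>\<^sub>k (2n choose 2k) x\<^sup>k\<close> and \<open>odd_binom_poly n = \<Sum>\<^sub>k (2n choose 2k+1) x\<^sup>k\<close> are the
  even and odd parts of \<open>(1 + \<surd>x)\<^sup>2\<^sup>n\<close>; the recursion multiplies by \<open>(1 + \<surd>x)\<^sup>2 = 1 + x + 2\<surd>x\<close>.\<close>

fun even_binom_poly :: "nat \<Rightarrow> real poly" and odd_binom_poly :: "nat \<Rightarrow> real poly" where
  "even_binom_poly 0 = 1"
| "odd_binom_poly 0 = 0"
| "even_binom_poly (Suc n) = even_binom_poly n * [:1, 1:] + smult 2 ([:0, 1:] * odd_binom_poly n)"
| "odd_binom_poly (Suc n) = smult 2 (even_binom_poly n) + [:1, 1:] * odd_binom_poly n"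

lemma binom_poly_tan:
  fixes \<theta> :: real
  assumes "cos \<theta> \<noteq> 0"
  shows "poly (even_binom_poly n) (- (tan \<theta>)\<^sup>2) * cos \<theta> ^ (2 * n) = cos (2 * real n * \<theta>) \<and>
         poly (odd_binom_poly n) (- (tan \<theta>)\<^sup>2) * tan \<theta> * cos \<theta> ^ (2 * n) = sin (2 * real n * \<theta>)"
proof (induction n)
  case 0
  then show ?case by simp
next
  case (Suc n)
  define a where "a = poly (even_binom_poly n) (- (tan \<theta>)\<^sup>2) * cos \<theta> ^ (2 * n)"
  define b where "b = poly (odd_binom_poly n) (- (tan \<theta>)\<^sup>2) * tan \<theta> * cos \<theta> ^ (2 * n)"
  have sin: "sin \<theta> = tan \<theta> * cos \<theta>"
    using assms by (simp add: tan_def)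
  have angle: "2 * real (Suc n) * \<theta> = 2 * real n * \<theta> + 2 * \<theta>"
    by (simp add: algebra_simps)
  have "poly (even_binom_poly (Suc n)) (- (tan \<theta>)\<^sup>2) * cos \<theta> ^ (2 * Suc n)
        = a * ((cos \<theta>)\<^sup>2 - (sin \<theta>)\<^sup>2) - b * (2 * sin \<theta> * cos \<theta>)"
    unfolding a_def b_def sin by (simp add: algebra_simps power2_eq_square)
  also have "\<dots> = cos (2 * real (Suc n) * \<theta>)"
    using Suc.IH unfolding a_def b_def angle cos_add cos_double sin_double by simp
  moreover have "poly (odd_binom_poly (Suc n)) (- (tan \<theta>)\<^sup>2) * tan \<theta> * cos \<theta> ^ (2 * Suc n)
        = b * ((cos \<theta>)\<^sup>2 - (sin \<theta>)\<^sup>2) + a * (2 * sin \<theta> * cos \<theta>)"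
    unfolding a_def b_def sin by (simp add: algebra_simps power2_eq_square)
  moreover have "\<dots> = sin (2 * real (Suc n) * \<theta>)"
    using Suc.IH unfolding a_def b_def angle sin_add cos_double sin_double by simp
  ultimately show ?case by simp
qed

definition hD_closed :: "nat \<Rightarrow> real poly" where
  "hD_closed n = even_binom_poly n - smult (2 * real n) ([:0, 1:] * [:1, 1:] ^ (n - 2))"

definition hD_trig :: "nat \<Rightarrow> real \<Rightarrow> real" where
  "hD_trig n \<phi> = cos (real n * \<phi>) + real n / 2 * (sin \<phi>)\<^sup>2 * cos \<phi> ^ (n - 2)"

lemma hD_closed_tan:
  fixes \<theta> :: real
  assumes "cos \<theta> \<noteq> 0" and "n \<ge> 2"
  shows "poly (hD_closed n) (- (tan \<theta>)\<^sup>2) * cos \<theta> ^ (2 * n) = hD_trig n (2 * \<theta>)"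
proof -
  define c where "c = cos \<theta>"
  define t where "t = tan \<theta>"
  have sin: "sin \<theta> = t * c"
    using assms(1) by (simp add: tan_def c_def t_def)
  have power: "c ^ (2 * n) = c\<^sup>2 * c\<^sup>2 * (c\<^sup>2) ^ (n - 2)"
  proof -
    have "2 * n = 2 + 2 + 2 * (n - 2)"
      using assms(2) by simp
    then show ?thesis
      by (metis power_add power_mult)
  qed
  have "poly (hD_closed n) (- t\<^sup>2) * c ^ (2 * n)
        = poly (even_binom_poly n) (- t\<^sup>2) * c ^ (2 * n)
          + 2 * real n * (t * c)\<^sup>2 * c\<^sup>2 * ((1 - t\<^sup>2) * c\<^sup>2) ^ (n - 2)"
    unfolding power power_mult_distrib by (simp add: hD_closed_def algebra_simps)
  also have "(1 - t\<^sup>2) * c\<^sup>2 = c\<^sup>2 - (t * c)\<^sup>2"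
    by (simp add: algebra_simps power_mult_distrib)
  also have "poly (even_binom_poly n) (- t\<^sup>2) * c ^ (2 * n)
          + 2 * real n * (t * c)\<^sup>2 * c\<^sup>2 * (c\<^sup>2 - (t * c)\<^sup>2) ^ (n - 2) = hD_trig n (2 * \<theta>)"
    using binom_poly_tan[OF assms(1), of n]
    unfolding sin[symmetric] unfolding hD_trig_def cos_double sin_double c_def t_def
    by (simp add: algebra_simps power2_eq_square)
  finally show ?thesis unfolding c_def t_def .
qed

lemma power_mult_one_minus_square_le:
  fixes w :: real
  assumes "0 \<le> w" and "w \<le> 1"
  shows "(real k + 2) * (1 - w\<^sup>2) * w ^ k \<le> 2 * (1 - w ^ (k + 2))"
proof -
  define S where "S = (real k + 1) * w ^ k + w ^ (k + 1)"
  have "(real k + 1) * w ^ k \<le> (\<Sum>i<k + 1. w ^ i)"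
    using sum_mono[of "{..<k + 1}" "\<lambda>_. w ^ k" "\<lambda>i. w ^ i"] power_decreasing[OF _ assms(1,2)]
    by (simp add: algebra_simps)
  then have "S \<le> (\<Sum>i<k + 2. w ^ i)"
    by (simp add: S_def)
  then have "(1 - w) * S \<le> (1 - w) * (\<Sum>i<k + 2. w ^ i)"
    by (rule mult_left_mono) (use assms in simp)
  also have "\<dots> = 1 - w ^ (k + 2)"
    by (rule one_diff_power_eq[symmetric])
  finally have le: "(1 - w) * S \<le> 1 - w ^ (k + 2)" .
  have "2 * ((1 - w) * S) = (real k + 2) * (1 - w\<^sup>2) * w ^ k + real k * (1 - w)\<^sup>2 * w ^ k"
    by (simp add: S_def algebra_simps power2_eq_square)
  moreover have "0 \<le> real k * (1 - w)\<^sup>2 * w ^ k"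
    using assms by simp
  ultimately have "(real k + 2) * (1 - w\<^sup>2) * w ^ k \<le> 2 * ((1 - w) * S)"
    by simp
  with le show ?thesis
    by simp
qed

lemma hD_trig_correction_bound:
  assumes "n \<ge> 3"
  shows "\<bar>real n / 2 * (sin \<phi>)\<^sup>2 * cos \<phi> ^ (n - 2)\<bar> < 1"
proof (cases "cos \<phi> = 0")
  case True
  then show ?thesis using assms by (simp add: power_0_left)
next
  case False
  define w where "w = \<bar>cos \<phi>\<bar>"
  obtain k where n: "n = k + 2"
    using assms by (intro that[of "n - 2"]) simp
  have w: "0 \<le> w" "w \<le> 1"
    by (auto simp: w_def)
  have "(cos \<phi>)\<^sup>2 \<le> 1"
    by (simp add: abs_square_le_1)
  have "\<bar>real n / 2 * (sin \<phi>)\<^sup>2 * cos \<phi> ^ (n - 2)\<bar> = (real k + 2) / 2 * (1 - w\<^sup>2) * w ^ k"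
    using \<open>(cos \<phi>)\<^sup>2 \<le> 1\<close> by (simp add: n w_def abs_mult power_abs sin_squared_eq)
  also have "\<dots> \<le> 1 - w ^ (k + 2)"
    using power_mult_one_minus_square_le[OF w, of k] by simp
  also have "\<dots> < 1"
    using False by (simp add: w_def)
  finally show ?thesis .
qed

lemma hD_trig_sign:
  assumes "n \<ge> 3"
  shows "(-1) ^ j * hD_trig n (real j * pi / real n) > 0"
proof -
  have "cos (real n * (real j * pi / real n)) = (-1) ^ j"
    using assms by simp
  then show ?thesis
    using hD_trig_correction_bound[OF assms, of "real j * pi / real n"]
    by (cases "even j") (auto simp: hD_trig_def abs_less_iff)
qed

lemma hD_trig_root_between:
  assumes "n \<ge> 3"
  shows "\<exists>\<phi>. real j * pi / real n < \<phi> \<and> \<phi> < real (Suc j) * pi / real n \<and> hD_trig n \<phi> = 0"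
proof -
  define a where "a = real j * pi / real n"
  define b where "b = real (Suc j) * pi / real n"
  define g where "g \<phi> = (-1) ^ j * hD_trig n \<phi>" for \<phi>
  have "g a > 0"
    using hD_trig_sign[OF assms, of j] by (simp add: g_def a_def)
  moreover have "g b < 0"
    using hD_trig_sign[OF assms, of "Suc j"] by (simp add: g_def b_def)
  moreover have "a \<le> b"
    using assms by (simp add: a_def b_def divide_right_mono)
  moreover have "isCont g x" for x
    unfolding g_def hD_trig_def by (intro continuous_intros)
  ultimately obtain \<phi> where "a \<le> \<phi>" "\<phi> \<le> b" "g \<phi> = 0"
    using IVT2[of g b 0 a] by auto
  moreover from this have "\<phi> \<noteq> a" "\<phi> \<noteq> b"
    using \<open>g a > 0\<close> \<open>g b < 0\<close> by auto
  ultimately have "a < \<phi>" "\<phi> < b" "hD_trig n \<phi> = 0"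
    by (auto simp: g_def)
  then show ?thesis
    unfolding a_def b_def by blast
qed

lemma hD_closed_root_tan_half:
  assumes "n \<ge> 2" and "0 < \<phi>" and "\<phi> < pi" and "hD_trig n \<phi> = 0"
  shows "poly (hD_closed n) (- (tan (\<phi> / 2))\<^sup>2) = 0"
proof -
  have "cos (\<phi> / 2) > 0"
    using assms(2,3) by (intro cos_gt_zero_pi) auto
  moreover have "poly (hD_closed n) (- (tan (\<phi> / 2))\<^sup>2) * cos (\<phi> / 2) ^ (2 * n) = 0"
    using hD_closed_tan[of "\<phi> / 2" n] assms(1,4) calculation by simp
  ultimately show ?thesis
    by simp
qed

lemma inj_on_tan_half_square: "inj_on (\<lambda>\<phi>. (tan (\<phi> / 2))\<^sup>2) {0<..<pi}"
proof (rule strict_mono_on_imp_inj_on, rule strict_mono_onI)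
  fix \<phi> \<psi> :: real
  assume "\<phi> \<in> {0<..<pi}" "\<psi> \<in> {0<..<pi}" "\<phi> < \<psi>"
  then have "0 < tan (\<phi> / 2)" "tan (\<phi> / 2) < tan (\<psi> / 2)"
    by (auto intro: tan_gt_zero tan_monotone)
  then show "(tan (\<phi> / 2))\<^sup>2 < (tan (\<psi> / 2))\<^sup>2"
    by (simp add: power_strict_mono)
qed

lemma poly_map_poly_of_real:
  "poly (map_poly of_real p) (of_real x) = (of_real (poly p x) :: 'a :: {real_algebra_1, field})"
  by (induction p) (auto simp: map_poly_pCons)

lemma real_rooted_if_real_roots:
  fixes p :: "real poly"
  assumes "p \<noteq> 0" and "finite A" and "degree p \<le> card A" and "\<And>x. x \<in> A \<Longrightarrow> poly p x = 0"
  shows "real_rooted p"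
  unfolding real_rooted_def
proof (intro allI impI)
  fix z :: complex
  define q where "q = map_poly complex_of_real p"
  assume "poly q z = 0"
  have "q \<noteq> 0"
    unfolding q_def using assms(1) by (subst map_poly_eq_0_iff) auto
  have "degree q = degree p"
    unfolding q_def by (subst degree_map_poly) auto
  show "z \<in> \<real>"
  proof (rule ccontr)
    assume "z \<notin> \<real>"
    then have "z \<notin> of_real ` A"
      by auto
    then have "Suc (card A) = card (insert z (of_real ` A))"
      using assms(2) by (simp add: card_image inj_on_def)
    also have "\<dots> \<le> card {x. poly q x = 0}"
    proof (rule card_mono[OF poly_roots_finite[OF \<open>q \<noteq> 0\<close>]])
      show "insert z (of_real ` A) \<subseteq> {x. poly q x = 0}"
        using \<open>poly q z = 0\<close> assms(4) by (auto simp: q_def poly_map_poly_of_real)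
    qed
    also have "\<dots> \<le> degree q"
      by (rule card_poly_roots_bound[OF \<open>q \<noteq> 0\<close>])
    finally show False
      using assms(3) \<open>degree q = degree p\<close> by simp
  qed
qed

lemma degree_binom_poly: "degree (even_binom_poly n) \<le> n \<and> degree (odd_binom_poly n) \<le> n"
proof (induction n)
  case (Suc n)
  have "degree (even_binom_poly n * [:1, 1:]) \<le> Suc n"
    using degree_mult_le[of "even_binom_poly n" "[:1, 1:]"] Suc by simp
  moreover have "degree (smult 2 ([:0, 1:] * odd_binom_poly n)) \<le> Suc n"
    using degree_mult_le[of "[:0, 1:]" "odd_binom_poly n"] Suc by simp
  moreover have "degree ([:1, 1:] * odd_binom_poly n) \<le> Suc n"
    using degree_mult_le[of "[:1, 1:]" "odd_binom_poly n"] Suc by simp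
  ultimately show ?case
    using Suc by (simp add: degree_add_le)
qed simp

lemma degree_hD_closed:
  assumes "n \<ge> 2"
  shows "degree (hD_closed n) \<le> n"
proof -
  have "degree ([:0, 1:] * [:1, 1::real:] ^ (n - 2)) \<le> n"
    using degree_mult_le[of "[:0, 1::real:]" "[:1, 1:] ^ (n - 2)"]
      degree_power_le[of "[:1, 1::real:]" "n - 2"] assms
    by simp
  then show ?thesis
    using degree_binom_poly[of n] by (simp add: hD_closed_def degree_diff_le)
qed

lemma poly_hD_closed_0: "poly (hD_closed n) 0 = 1"
proof -
  have "poly (even_binom_poly n) 0 = 1"
    by (induction n) simp_all
  then show ?thesis
    by (simp add: hD_closed_def)
qed

lemma hD_trig_roots:
  assumes n: "n \<ge> 3"
  obtains f where "inj_on f {..<n}" and "\<And>j. j < n \<Longrightarrow> f j \<in> {0<..<pi} \<and> hD_trig n (f j) = 0"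
proof -
  obtain f where f: "\<And>j. real j * pi / real n < f j \<and> f j < real (Suc j) * pi / real n \<and> hD_trig n (f j) = 0"
    using hD_trig_root_between[OF n] by metis
  have "f j < f j'" if "j < j'" for j j'
  proof -
    have "real (Suc j) * pi / real n \<le> real j' * pi / real n"
      using that n by (intro divide_right_mono mult_right_mono) auto
    then show ?thesis
      using f[of j] f[of j'] by linarith
  qed
  then have "inj_on f {..<n}"
    by (intro strict_mono_imp_inj_on strict_monoI)
  moreover have "f j \<in> {0<..<pi}" if "j < n" for j
  proof -
    have "real (Suc j) * pi / real n \<le> real n * pi / real n"
      using that by (intro divide_right_mono mult_right_mono) auto
    then have "f j < pi"
      using f[of j] n by simp
    moreover have "0 \<le> real j * pi / real n"
      by simp
    then have "0 < f j"
      using f[of j] by linarith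
    ultimately show ?thesis
      by simp
  qed
  ultimately show ?thesis
    using that f by blast
qed

lemma hD_closed_distinct_roots:
  assumes "n \<ge> 3"
  obtains r where "inj_on r {..<n}" and "\<And>j. j < n \<Longrightarrow> poly (hD_closed n) (r j) = 0"
proof -
  obtain f where f_inj: "inj_on f {..<n}" and f: "\<And>j. j < n \<Longrightarrow> f j \<in> {0<..<pi} \<and> hD_trig n (f j) = 0"
    using hD_trig_roots[OF assms] by blast
  define r where "r j = - (tan (f j / 2))\<^sup>2" for j
  have "inj_on r {..<n}"
  proof (rule inj_onI)
    fix j j'
    assume "j \<in> {..<n}" "j' \<in> {..<n}" "r j = r j'"
    then show "j = j'"
      using inj_on_tan_half_square f f_inj by (auto simp: r_def inj_on_def)
  qed
  moreover have "poly (hD_closed n) (r j) = 0" if "j < n" for j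
    using hD_closed_root_tan_half[of n "f j"] f[OF that] assms by (simp add: r_def)
  ultimately show ?thesis
    using that by blast
qed

lemma hD_closed_real_rooted:
  assumes "n \<ge> 2"
  shows "real_rooted (hD_closed n)"
proof (cases "n = 2")
  case True
  have "poly (map_poly complex_of_real (hD_closed 2)) z = (z + 1)\<^sup>2" for z
    by (simp add: hD_closed_def numeral_2_eq_2 map_poly_pCons algebra_simps power2_eq_square)
  then show ?thesis
    using True by (auto simp: real_rooted_def add_eq_0_iff2)
next
  case False
  with assms have "n \<ge> 3"
    by simp
  then obtain r where "inj_on r {..<n}" and "\<And>j. j < n \<Longrightarrow> poly (hD_closed n) (r j) = 0"
    using hD_closed_distinct_roots by blast
  moreover have "hD_closed n \<noteq> 0"
    using poly_hD_closed_0[of n] by auto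
  ultimately show ?thesis
    using degree_hD_closed[OF assms]
    by (intro real_rooted_if_real_roots[where A = "r ` {..<n}"]) (auto simp: card_image)
qed

section \<open>Counting integer vectors by \<open>l\<^sub>1\<close>-norm\<close>

definition Zvecs :: "nat \<Rightarrow> vec set" where
  "Zvecs n = {v. \<forall>i\<ge>n. v i = 0}"

definition l1_norm :: "nat \<Rightarrow> vec \<Rightarrow> nat" where
  "l1_norm n v = (\<Sum>i<n. nat \<bar>v i\<bar>)"

lemma int_l1_norm: "int (l1_norm n v) = (\<Sum>i<n. \<bar>v i\<bar>)"
  by (simp add: l1_norm_def)

lemma l1_norm_Suc: "l1_norm (Suc n) v = l1_norm n (v(n := 0)) + nat \<bar>v n\<bar>"
  unfolding l1_norm_def by (auto intro: sum.cong)

lemma abs_le_l1_norm: "i < n \<Longrightarrow> \<bar>v i\<bar> \<le> int (l1_norm n v)"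
  unfolding int_l1_norm by (rule member_le_sum) auto

lemma finite_l1_ball: "finite {v \<in> Zvecs n. l1_norm n v \<le> m}"
proof (rule finite_subset)
  show "{v \<in> Zvecs n. l1_norm n v \<le> m}
        \<subseteq> {v. \<forall>i. (i \<in> {..<n} \<longrightarrow> v i \<in> {-int m..int m}) \<and> (i \<notin> {..<n} \<longrightarrow> v i = 0)}"
  proof (intro subsetI CollectI allI conjI impI)
    fix v i
    assume v: "v \<in> {v \<in> Zvecs n. l1_norm n v \<le> m}"
    show "v i \<in> {-int m..int m}" if "i \<in> {..<n}"
      using abs_le_l1_norm[of i n v] that v by auto
    show "v i = 0" if "i \<notin> {..<n}"
      using that v by (simp add: Zvecs_def)
  qed
qed (rule finite_set_of_finite_funs; simp)

lemma card_Zvecs_Suc_fibres: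
  assumes "finite S" and "\<And>a. a \<in> S \<Longrightarrow> finite {w \<in> Zvecs n. P w a}"
  shows "card {v \<in> Zvecs (Suc n). v n \<in> S \<and> P (v(n := 0)) (v n)} = (\<Sum>a\<in>S. card {w \<in> Zvecs n. P w a})"
proof -
  have "bij_betw (\<lambda>v. (v n, v(n := 0))) {v \<in> Zvecs (Suc n). v n \<in> S \<and> P (v(n := 0)) (v n)}
          (SIGMA a:S. {w \<in> Zvecs n. P w a})"
  proof (rule bij_betw_byWitness[where f' = "\<lambda>(a, w). w(n := a)"])
    have "w(n := 0) = w" if "w \<in> Zvecs n" for w
      using that by (simp add: Zvecs_def fun_upd_idem)
    then show "(\<lambda>v. (v n, v(n := 0))) ` {v \<in> Zvecs (Suc n). v n \<in> S \<and> P (v(n := 0)) (v n)}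
               \<subseteq> (SIGMA a:S. {w \<in> Zvecs n. P w a})"
      and "(\<lambda>(a, w). w(n := a)) ` (SIGMA a:S. {w \<in> Zvecs n. P w a})
               \<subseteq> {v \<in> Zvecs (Suc n). v n \<in> S \<and> P (v(n := 0)) (v n)}"
      by (auto simp: Zvecs_def)
  qed (auto simp: Zvecs_def fun_eq_iff)
  then show ?thesis
    using assms by (simp add: bij_betw_same_card)
qed

lemma sum_abs_symmetric:
  fixes g :: "nat \<Rightarrow> 'a :: comm_semiring_1"
  shows "(\<Sum>a = -int m..int m. g (nat \<bar>a\<bar>)) = g 0 + 2 * (\<Sum>j = 1..m. g j)"
proof (induction m)
  case (Suc m)
  have "{-int (Suc m)..int (Suc m)} = insert (int (Suc m)) (insert (- int (Suc m)) {-int m..int m})"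
    by auto
  moreover have "nat (1 + int m) = Suc m"
    by simp
  ultimately show ?case
    using Suc.IH by (simp add: algebra_simps mult_2)
qed simp

definition l1_parity_count :: "nat \<Rightarrow> nat \<Rightarrow> nat" where
  "l1_parity_count n m = card {v \<in> Zvecs n. l1_norm n v \<le> m \<and> even (l1_norm n v + m)}"

lemma l1_parity_count_0: "l1_parity_count 0 m = (if even m then 1 else 0)"
proof -
  have "Zvecs 0 = {\<lambda>_. 0}"
    by (auto simp: Zvecs_def)
  then show ?thesis
    by (auto simp: l1_parity_count_def l1_norm_def)
qed

lemma card_l1_parity_ball_Suc:
  "card {v \<in> Zvecs (Suc n). l1_norm (Suc n) v \<le> m \<and> even (l1_norm (Suc n) v + m) \<and> P (nat \<bar>v n\<bar>)}
   = (\<Sum>a = -int m..int m. if P (nat \<bar>a\<bar>) then l1_parity_count n (m - nat \<bar>a\<bar>) else 0)"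
proof -
  define Q where "Q w a \<longleftrightarrow> l1_norm n w + nat \<bar>a\<bar> \<le> m \<and> even (l1_norm n w + nat \<bar>a\<bar> + m) \<and> P (nat \<bar>a\<bar>)"
    for w a
  have fibre: "card {w \<in> Zvecs n. Q w a}
                 = (if P (nat \<bar>a\<bar>) then l1_parity_count n (m - nat \<bar>a\<bar>) else 0)"
    if "a \<in> {-int m..int m}" for a
  proof -
    have a: "nat \<bar>a\<bar> \<le> m"
      using that by auto
    have "l + nat \<bar>a\<bar> + m = l + (m - nat \<bar>a\<bar>) + 2 * nat \<bar>a\<bar>" for l
      using a by simp
    then have "{w \<in> Zvecs n. Q w a} = (if P (nat \<bar>a\<bar>) then
        {w \<in> Zvecs n. l1_norm n w \<le> m - nat \<bar>a\<bar> \<and> even (l1_norm n w + (m - nat \<bar>a\<bar>))} else {})"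
      using a by (auto simp: Q_def)
    then show ?thesis
      by (simp add: l1_parity_count_def)
  qed
  have "{v \<in> Zvecs (Suc n). l1_norm (Suc n) v \<le> m \<and> even (l1_norm (Suc n) v + m) \<and> P (nat \<bar>v n\<bar>)}
        = {v \<in> Zvecs (Suc n). v n \<in> {-int m..int m} \<and> Q (v(n := 0)) (v n)}"
    by (auto simp: Q_def l1_norm_Suc)
  also have "card \<dots> = (\<Sum>a = -int m..int m. card {w \<in> Zvecs n. Q w a})"
  proof (rule card_Zvecs_Suc_fibres)
    show "finite {w \<in> Zvecs n. Q w a}" for a
      by (rule finite_subset[OF _ finite_l1_ball[of n m]]) (auto simp: Q_def)
  qed simp
  finally show ?thesis
    using fibre by simp
qed

lemma l1_parity_count_Suc:
  "l1_parity_count (Suc n) m = l1_parity_count n m + 2 * (\<Sum>i<m. l1_parity_count n i)"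
proof -
  have "l1_parity_count (Suc n) m = (\<Sum>a = -int m..int m. l1_parity_count n (m - nat \<bar>a\<bar>))"
    using card_l1_parity_ball_Suc[where P = "\<lambda>_. True"] unfolding l1_parity_count_def[of "Suc n"] by simp
  also have "\<dots> = l1_parity_count n m + 2 * (\<Sum>j = 1..m. l1_parity_count n (m - j))"
    by (simp add: sum_abs_symmetric[of "\<lambda>j. l1_parity_count n (m - j)"])
  also have "(\<Sum>j = 1..m. l1_parity_count n (m - j)) = (\<Sum>i<m. l1_parity_count n i)"
    by (rule sum.reindex_bij_witness[of _ "\<lambda>i. m - i" "\<lambda>j. m - j"]) auto
  finally show ?thesis .
qed

lemma sum_upper_half_reflect:
  fixes f :: "nat \<Rightarrow> 'a :: comm_monoid_add"
  shows "(\<Sum>j = 1..2 * k. if k < j then f (2 * k - j) else 0) = (\<Sum>i<k. f i)"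
proof -
  have "(\<Sum>j = 1..2 * k. if k < j then f (2 * k - j) else 0) = (\<Sum>j = k + 1..2 * k. f (2 * k - j))"
    by (subst sum.mono_neutral_right[of "{1..2 * k}" "{k + 1..2 * k}"]) auto
  also have "\<dots> = (\<Sum>i<k. f i)"
    by (rule sum.reindex_bij_witness[of _ "\<lambda>i. 2 * k - i" "\<lambda>j. 2 * k - j"]) auto
  finally show ?thesis .
qed

definition far_coord :: "nat \<Rightarrow> nat \<Rightarrow> nat \<Rightarrow> vec set" where
  "far_coord n k i = {v \<in> Zvecs n. l1_norm n v \<le> 2 * k \<and> even (l1_norm n v) \<and> k < nat \<bar>v i\<bar>}"

lemma card_far_coord_last: "card (far_coord (Suc n) k n) = 2 * (\<Sum>i<k. l1_parity_count n i)"
proof -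
  have "card (far_coord (Suc n) k n)
        = (\<Sum>a = -int (2 * k)..int (2 * k). if k < nat \<bar>a\<bar> then l1_parity_count n (2 * k - nat \<bar>a\<bar>) else 0)"
    using card_l1_parity_ball_Suc[where P = "\<lambda>j. k < j" and m = "2 * k"] by (simp add: far_coord_def)
  also have "\<dots> = 2 * (\<Sum>j = 1..2 * k. if k < j then l1_parity_count n (2 * k - j) else 0)"
    by (subst sum_abs_symmetric[where g = "\<lambda>j. if k < j then l1_parity_count n (2 * k - j) else 0"]) simp
  finally show ?thesis
    by (simp only: sum_upper_half_reflect)
qed

lemma card_far_coord_eq:
  assumes "i < n" and "j < n"
  shows "card (far_coord n k i) = card (far_coord n k j)"
proof -
  have l1: "l1_norm n (v \<circ> Transposition.transpose i j) = l1_norm n v" for v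
    unfolding l1_norm_def using assms
    by (intro sum.reindex_bij_witness[of _ "Transposition.transpose i j" "Transposition.transpose i j"])
      (auto simp: transpose_def)
  have "bij_betw (\<lambda>v. v \<circ> Transposition.transpose i j) (far_coord n k i) (far_coord n k j)"
    by (rule bij_betw_byWitness[where f' = "\<lambda>v. v \<circ> Transposition.transpose i j"])
      (use assms in \<open>auto simp: far_coord_def Zvecs_def l1 transpose_def\<close>)
  then show ?thesis
    by (rule bij_betw_same_card)
qed

lemma far_coord_disjoint:
  assumes "i \<noteq> j" and "i < n" and "j < n"
  shows "far_coord n k i \<inter> far_coord n k j = {}"
proof -
  have False if "v \<in> far_coord n k i" "v \<in> far_coord n k j" for v
  proof -
    have "nat \<bar>v i\<bar> + nat \<bar>v j\<bar> \<le> l1_norm n v"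
      using sum_mono2[of "{..<n}" "{i, j}" "\<lambda>t. nat \<bar>v t\<bar>"] assms by (simp add: l1_norm_def)
    then show False
      using that by (simp add: far_coord_def)
  qed
  then show ?thesis
    by blast
qed

definition D_ball :: "nat \<Rightarrow> nat \<Rightarrow> vec set" where
  "D_ball n k = {v \<in> Zvecs n. even (l1_norm n v) \<and> l1_norm n v \<le> 2 * k \<and> (\<forall>i<n. \<bar>v i\<bar> \<le> int k)}"

lemma finite_D_ball: "finite (D_ball n k)"
  by (rule finite_subset[OF _ finite_l1_ball[of n "2 * k"]]) (auto simp: D_ball_def)

lemma l1_parity_count_eq_D_ball:
  "l1_parity_count (Suc n) (2 * k)
   = card (D_ball (Suc n) k) + Suc n * (2 * (\<Sum>i<k. l1_parity_count n i))"
proof -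
  let ?far = "\<Union>i<Suc n. far_coord (Suc n) k i"
  have far_finite: "finite (far_coord (Suc n) k i)" for i
    by (rule finite_subset[OF _ finite_l1_ball[of "Suc n" "2 * k"]]) (auto simp: far_coord_def)
  have "{v \<in> Zvecs (Suc n). l1_norm (Suc n) v \<le> 2 * k \<and> even (l1_norm (Suc n) v + 2 * k)}
        = D_ball (Suc n) k \<union> ?far"
    by (auto simp: D_ball_def far_coord_def not_less)
  then have "l1_parity_count (Suc n) (2 * k) = card (D_ball (Suc n) k \<union> ?far)"
    by (simp add: l1_parity_count_def)
  also have "\<dots> = card (D_ball (Suc n) k) + card ?far"
  proof (rule card_Un_disjoint)
    show "D_ball (Suc n) k \<inter> ?far = {}"
      by (auto simp: D_ball_def far_coord_def)
  qed (simp_all add: finite_D_ball far_finite)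
  also have "card ?far = (\<Sum>i<Suc n. card (far_coord (Suc n) k i))"
    by (rule card_UN_disjoint) (auto simp: far_finite far_coord_disjoint)
  also have "\<dots> = (\<Sum>i<Suc n. card (far_coord (Suc n) k n))"
    by (intro sum.cong refl card_far_coord_eq) auto
  finally show ?thesis
    by (simp add: card_far_coord_last)
qed

section \<open>The word length of \<open>D\<^sub>n\<close>\<close>

definition root_vec :: "nat \<Rightarrow> nat \<Rightarrow> int \<Rightarrow> int \<Rightarrow> vec" where
  "root_vec i j s t = (\<lambda>k. (if k = i then s else 0) + (if k = j then t else 0))"

lemma mem_M_D_iff:
  "m \<in> M_D n \<longleftrightarrow> (\<exists>i j s t. i < j \<and> j < n \<and> s \<in> {1, -1} \<and> t \<in> {1, -1} \<and> m = root_vec i j s t)"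
proof -
  have "(\<lambda>k. if k = i then s else if k = j then t else 0) = root_vec i j s t" if "i < j" for i j s t
    using that unfolding root_vec_def by (intro ext) simp
  then show ?thesis
    unfolding M_D_def mem_Collect_eq by (intro iff_exI) (metis (no_types))
qed

lemma finite_M_D: "finite (M_D n)"
proof -
  have "M_D n \<subseteq> (\<lambda>(i, j, s, t). root_vec i j s t) ` ({..<n} \<times> {..<n} \<times> {1, -1} \<times> {1, -1})"
  proof
    fix m
    assume "m \<in> M_D n"
    then obtain i j s t where "i < j" "j < n" "s \<in> {1, -1}" "t \<in> {1, -1}" "m = root_vec i j s t"
      by (auto simp: mem_M_D_iff)
    then show "m \<in> (\<lambda>(i, j, s, t). root_vec i j s t) ` ({..<n} \<times> {..<n} \<times> {1, -1} \<times> {1, -1})"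
      by (intro image_eqI[where x = "(i, j, s, t)"]) auto
  qed
  then show ?thesis
    by (rule finite_subset) auto
qed

lemma root_vec_in_M_D:
  assumes "i \<noteq> j" "i < n" "j < n" "s \<in> {1, -1}" "t \<in> {1, -1}"
  shows "root_vec i j s t \<in> M_D n"
proof (cases "i < j")
  case False
  then have "j < i"
    using assms(1) by simp
  moreover have "root_vec i j s t = root_vec j i t s"
    unfolding root_vec_def by (intro ext) simp
  ultimately show ?thesis
    using assms unfolding mem_M_D_iff by blast
qed (use assms in \<open>unfold mem_M_D_iff, blast\<close>)

lemma sum_root_vec:
  fixes g :: "int \<Rightarrow> 'a :: comm_monoid_add"
  assumes "i \<noteq> j" "i < n" "j < n" "g 0 = 0"
  shows "(\<Sum>k<n. g (root_vec i j s t k)) = g s + g t"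
proof -
  have "(\<Sum>k<n. g (root_vec i j s t k)) = (\<Sum>k<n. (if k = i then g s else 0) + (if k = j then g t else 0))"
    using assms by (intro sum.cong) (auto simp: root_vec_def)
  then show ?thesis
    using assms by (simp add: sum.distrib)
qed

lemma M_D_root_props:
  assumes "m \<in> M_D n"
  shows "m \<in> Zvecs n" and "\<bar>m k\<bar> \<le> 1" and "(\<Sum>k<n. \<bar>m k\<bar>) = 2" and "even (\<Sum>k<n. m k)"
proof -
  obtain i j s t where ij: "i < j" "j < n" and st: "s \<in> {1, -1}" "t \<in> {1, -1}" and m: "m = root_vec i j s t"
    using assms by (auto simp: mem_M_D_iff)
  show "m \<in> Zvecs n" "\<bar>m k\<bar> \<le> 1"
    using ij st by (auto simp: m Zvecs_def root_vec_def)
  show "(\<Sum>k<n. \<bar>m k\<bar>) = 2" "even (\<Sum>k<n. m k)"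
    using ij st sum_root_vec[of i j n abs s t] sum_root_vec[of i j n "\<lambda>x. x" s t] by (auto simp: m)
qed

lemma even_sum_iff_even_l1_norm: "even (\<Sum>t<n. v t) \<longleftrightarrow> even (l1_norm n v)"
proof -
  have "even ((\<Sum>t<n. \<bar>v t\<bar>) - (\<Sum>t<n. v t))"
    unfolding sum_subtractf[symmetric] by (intro dvd_sum) (auto simp: abs_if)
  then have "even (\<Sum>t<n. v t) \<longleftrightarrow> even (\<Sum>t<n. \<bar>v t\<bar>)"
    by (metis diff_add_cancel even_add)
  then show ?thesis
    by (simp flip: int_l1_norm)
qed

lemma represents_M_D_imp_D_ball:
  assumes "represents (M_D n) v k"
  shows "v \<in> D_ball n k"
proof -
  let ?M = "M_D n"
  obtain c where v: "v = (\<lambda>t. \<Sum>m\<in>?M. int (c m) * m t)" and k: "(\<Sum>m\<in>?M. int (c m)) = int k"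
    using assms unfolding represents_def by (metis of_nat_sum)
  have abs_v: "\<bar>v t\<bar> \<le> (\<Sum>m\<in>?M. int (c m) * \<bar>m t\<bar>)" for t
    unfolding v using sum_abs[of "\<lambda>m. int (c m) * m t" ?M] by (simp add: abs_mult)
  have "v \<in> Zvecs n"
    using M_D_root_props(1) by (auto simp: v Zvecs_def intro!: sum.neutral)
  moreover have "\<bar>v t\<bar> \<le> int k" for t
  proof -
    have "(\<Sum>m\<in>?M. int (c m) * \<bar>m t\<bar>) \<le> (\<Sum>m\<in>?M. int (c m))"
      using M_D_root_props(2) by (intro sum_mono) (simp add: mult_left_le)
    then show ?thesis
      using abs_v[of t] k by linarith
  qed
  moreover have "int (l1_norm n v) \<le> 2 * int k"
  proof -
    have "int (l1_norm n v) \<le> (\<Sum>t<n. \<Sum>m\<in>?M. int (c m) * \<bar>m t\<bar>)"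
      unfolding int_l1_norm by (intro sum_mono abs_v)
    also have "\<dots> = (\<Sum>m\<in>?M. int (c m) * (\<Sum>t<n. \<bar>m t\<bar>))"
      by (simp add: sum.swap[of _ "{..<n}"] sum_distrib_left)
    also have "\<dots> = 2 * int k"
      using M_D_root_props(3) k by (simp add: sum_distrib_right[symmetric] mult.commute)
    finally show ?thesis .
  qed
  moreover have "even (\<Sum>t<n. v t)"
  proof -
    have "(\<Sum>t<n. v t) = (\<Sum>m\<in>?M. int (c m) * (\<Sum>t<n. m t))"
      by (simp add: v sum.swap[of _ "{..<n}"] sum_distrib_left)
    then show ?thesis
      using M_D_root_props(4) by (simp add: dvd_sum)
  qed
  ultimately show ?thesis
    by (auto simp: D_ball_def even_sum_iff_even_l1_norm)
qed

lemma represents_zero: "represents M (\<lambda>_. 0) 0"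
  unfolding represents_def by (rule exI[of _ "\<lambda>_. 0"]) simp

lemma represents_add:
  assumes "represents M w k" and "m \<in> M" and "finite M"
  shows "represents M (\<lambda>t. w t + m t) (Suc k)"
proof -
  obtain c where w: "w = (\<lambda>t. \<Sum>x\<in>M. int (c x) * x t)" and k: "(\<Sum>x\<in>M. c x) = k"
    using assms(1) unfolding represents_def by blast
  define c' where "c' x = c x + (if x = m then 1 else 0)" for x
  have "w t + m t = (\<Sum>x\<in>M. int (c' x) * x t)" for t
  proof -
    have "(\<Sum>x\<in>M. int (c' x) * x t) = (\<Sum>x\<in>M. int (c x) * x t + (if x = m then m t else 0))"
      by (intro sum.cong) (auto simp: c'_def algebra_simps)
    then show ?thesis
      using assms(2,3) by (simp add: sum.distrib w)
  qed
  moreover have "(\<Sum>x\<in>M. c' x) = Suc k"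
    using assms(2,3) k by (simp add: c'_def sum.distrib)
  ultimately show ?thesis
    unfolding represents_def by auto
qed

lemma exists_two_largest:
  fixes f :: "nat \<Rightarrow> 'a :: linorder"
  assumes "n \<ge> 2"
  obtains i j where "i < n" "j < n" "i \<noteq> j" "\<forall>t<n. f t \<le> f i" "\<forall>t<n. t \<noteq> i \<longrightarrow> f t \<le> f j"
proof -
  have argmax: "\<exists>i\<in>A. \<forall>t\<in>A. f t \<le> f i" if "finite A" "A \<noteq> {}" for A :: "nat set"
  proof -
    have "Max (f ` A) \<in> f ` A"
      using that by (intro Max_in) auto
    then obtain i where i: "i \<in> A" "f i = Max (f ` A)"
      by (metis imageE)
    have "\<forall>t\<in>A. f t \<le> f i"
      unfolding i(2) using that(1) by (auto intro!: Max_ge)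
    with i(1) show ?thesis
      by blast
  qed
  have "0 \<in> {..<n}"
    using assms by simp
  then obtain i where i: "i < n" "\<forall>t<n. f t \<le> f i"
    using argmax[of "{..<n}"] by blast
  have "(if i = 0 then 1 else 0) \<in> {..<n} - {i}"
    using assms by auto
  then obtain j where "j \<in> {..<n} - {i}" "\<forall>t\<in>{..<n} - {i}. f t \<le> f j"
    using argmax[of "{..<n} - {i}"] by blast
  with i show ?thesis
    using that by auto
qed

text \<open>Unlike \<open>sgn\<close>, never \<open>0\<close>, so \<open>root_vec i j (unit_sign a) (unit_sign b)\<close> is always a root.\<close>

definition unit_sign :: "int \<Rightarrow> int" where
  "unit_sign x = (if x < 0 then -1 else 1)"

lemma int_l1_norm_update2:
  assumes "i \<noteq> j" and "i < n" and "j < n"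
  shows "int (l1_norm n (v(i := a, j := b))) = int (l1_norm n v) - \<bar>v i\<bar> - \<bar>v j\<bar> + \<bar>a\<bar> + \<bar>b\<bar>"
proof -
  have split: "(\<Sum>t<n. \<bar>u t\<bar>) = (\<Sum>t\<in>{..<n} - {i, j}. \<bar>u t\<bar>) + \<bar>u i\<bar> + \<bar>u j\<bar>" for u :: vec
    using sum.subset_diff[of "{i, j}" "{..<n}" "\<lambda>t. \<bar>u t\<bar>"] assms by simp
  have "(\<Sum>t\<in>{..<n} - {i, j}. \<bar>(v(i := a, j := b)) t\<bar>) = (\<Sum>t\<in>{..<n} - {i, j}. \<bar>v t\<bar>)"
    by (intro sum.cong) auto
  then show ?thesis
    unfolding int_l1_norm using split[of v] split[of "v(i := a, j := b)"] assms by simp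
qed

lemma abs_sum_three_le_l1_norm:
  assumes "i \<noteq> j" "i \<noteq> x" "j \<noteq> x" "i < n" "j < n" "x < n"
  shows "\<bar>v i\<bar> + \<bar>v j\<bar> + \<bar>v x\<bar> \<le> int (l1_norm n v)"
  using sum_mono2[of "{..<n}" "{i, j, x}" "\<lambda>t. \<bar>v t\<bar>"] assms by (simp add: int_l1_norm)

text \<open>The greedy step: subtracting the root that points towards the two largest coordinates lowers the
  maximal coordinate, and the \<open>l\<^sub>1\<close>-norm drops by 2 unless \<open>v\<close> is supported on one coordinate.\<close>

lemma D_ball_Suc_step:
  assumes v: "v \<in> D_ball n (Suc k)" and ij: "i < n" "j < n" "i \<noteq> j" and "v i \<noteq> 0"
    and max_i: "\<forall>t<n. \<bar>v t\<bar> \<le> \<bar>v i\<bar>" and max_j: "\<forall>t<n. t \<noteq> i \<longrightarrow> \<bar>v t\<bar> \<le> \<bar>v j\<bar>"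
  shows "v(i := v i - unit_sign (v i), j := v j - unit_sign (v j)) \<in> D_ball n k"
proof -
  define w where "w = v(i := v i - unit_sign (v i), j := v j - unit_sign (v j))"
  have v_ball: "v \<in> Zvecs n" "even (int (l1_norm n v))" "int (l1_norm n v) \<le> 2 * int k + 2"
    "\<forall>t<n. \<bar>v t\<bar> \<le> int k + 1"
    using v by (auto simp: D_ball_def)
  have wi: "\<bar>w i\<bar> = \<bar>v i\<bar> - 1" and wj: "\<bar>w j\<bar> = (if v j = 0 then 1 else \<bar>v j\<bar> - 1)"
    using \<open>v i \<noteq> 0\<close> ij by (auto simp: w_def unit_sign_def)
  have l1_w: "int (l1_norm n w) = int (l1_norm n v) - \<bar>v i\<bar> - \<bar>v j\<bar> + \<bar>w i\<bar> + \<bar>w j\<bar>"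
    using int_l1_norm_update2[OF ij(3,1,2), of v] ij by (simp add: w_def)
  have sparse: "int (l1_norm n v) = \<bar>v i\<bar> \<and> 1 \<le> k" if "v j = 0"
  proof -
    have "(\<Sum>t<n. \<bar>v t\<bar>) = (\<Sum>t<n. if t = i then \<bar>v i\<bar> else 0)"
      using max_j that by (intro sum.cong) auto
    then have "int (l1_norm n v) = \<bar>v i\<bar>"
      using ij by (simp add: int_l1_norm)
    moreover from this have "1 \<le> k"
      using v_ball(2,4) ij \<open>v i \<noteq> 0\<close> by fastforce
    ultimately show ?thesis ..
  qed
  have others: "\<bar>v t\<bar> \<le> int k" if "t < n" "t \<noteq> i" "t \<noteq> j" for t
  proof -
    have "\<bar>v t\<bar> \<le> \<bar>v j\<bar>" "\<bar>v j\<bar> \<le> \<bar>v i\<bar>"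
      using max_i max_j that ij by auto
    moreover have "\<bar>v i\<bar> + \<bar>v j\<bar> + \<bar>v t\<bar> \<le> int (l1_norm n v)"
      using abs_sum_three_le_l1_norm[of i j t n v] that ij by auto
    ultimately show ?thesis
      using v_ball(3) by linarith
  qed
  have "w \<in> Zvecs n"
    using v_ball(1) ij by (auto simp: w_def Zvecs_def)
  moreover have "even (int (l1_norm n w)) \<and> int (l1_norm n w) \<le> 2 * int k"
    using l1_w wi wj v_ball(2,3) sparse v_ball(4) ij by (cases "v j = 0") auto
  moreover have "\<bar>w t\<bar> \<le> int k" if "t < n" for t
    using wi wj sparse v_ball(4) others[OF that] that ij by (cases "t = i \<or> t = j") (auto simp: w_def)
  ultimately show ?thesis
    unfolding w_def[symmetric] D_ball_def by auto
qed

lemma Zvecs_zero: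
  assumes "v \<in> Zvecs n" and "\<forall>t<n. v t = 0"
  shows "v = (\<lambda>_. 0)"
proof
  show "v t = 0" for t
    using assms by (cases "t < n") (auto simp: Zvecs_def)
qed

lemma D_ball_imp_represents:
  assumes "n \<ge> 2" and "v \<in> D_ball n k"
  shows "\<exists>k'\<le>k. represents (M_D n) v k'"
  using assms(2)
proof (induction k arbitrary: v)
  case 0
  then have "v = (\<lambda>_. 0)"
    by (intro Zvecs_zero) (auto simp: D_ball_def)
  then show ?case
    using represents_zero by blast
next
  case (Suc k)
  show ?case
  proof (cases "\<forall>t<n. v t = 0")
    case True
    then have "v = (\<lambda>_. 0)"
      using Suc.prems by (intro Zvecs_zero) (auto simp: D_ball_def)
    then show ?thesis
      using represents_zero by blast
  next
    case False
    obtain i j where ij: "i < n" "j < n" "i \<noteq> j"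
      and max_i: "\<forall>t<n. \<bar>v t\<bar> \<le> \<bar>v i\<bar>" and max_j: "\<forall>t<n. t \<noteq> i \<longrightarrow> \<bar>v t\<bar> \<le> \<bar>v j\<bar>"
      using exists_two_largest[OF assms(1), of "\<lambda>t. \<bar>v t\<bar>"] by blast
    have "v i \<noteq> 0"
      using False max_i by force
    define m where "m = root_vec i j (unit_sign (v i)) (unit_sign (v j))"
    have "m \<in> M_D n"
      unfolding m_def using ij by (intro root_vec_in_M_D) (auto simp: unit_sign_def)
    have "v(i := v i - unit_sign (v i), j := v j - unit_sign (v j)) = (\<lambda>t. v t - m t)"
      using ij by (auto simp: m_def root_vec_def)
    then have "(\<lambda>t. v t - m t) \<in> D_ball n k"
      using D_ball_Suc_step[OF Suc.prems ij \<open>v i \<noteq> 0\<close> max_i max_j] by simp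
    then obtain k' where "k' \<le> k" "represents (M_D n) (\<lambda>t. v t - m t) k'"
      using Suc.IH by blast
    then show ?thesis
      using represents_add[OF _ \<open>m \<in> M_D n\<close> finite_M_D, of "\<lambda>t. v t - m t" k'] by auto
  qed
qed

lemma D_ball_mono: "k \<le> k' \<Longrightarrow> D_ball n k \<subseteq> D_ball n k'"
  by (fastforce simp: D_ball_def)

lemma word_length_ball_eq_D_ball:
  assumes "n \<ge> 2"
  shows "{v \<in> gen_lattice (M_D n). word_length (M_D n) v \<le> k} = D_ball n k"
proof (intro equalityI subsetI)
  fix v
  assume v: "v \<in> {v \<in> gen_lattice (M_D n). word_length (M_D n) v \<le> k}"
  then have "represents (M_D n) v (word_length (M_D n) v)"
    unfolding gen_lattice_def word_length_def by (auto intro: LeastI)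
  then show "v \<in> D_ball n k"
    using represents_M_D_imp_D_ball D_ball_mono v by blast
next
  fix v
  assume "v \<in> D_ball n k"
  then obtain k' where "k' \<le> k" "represents (M_D n) v k'"
    using D_ball_imp_represents[OF assms] by blast
  moreover from this have "word_length (M_D n) v \<le> k'"
    unfolding word_length_def by (intro Least_le)
  ultimately show "v \<in> {v \<in> gen_lattice (M_D n). word_length (M_D n) v \<le> k}"
    by (auto simp: gen_lattice_def)
qed

section \<open>Generating functions\<close>

definition fps_even :: "'a fps \<Rightarrow> 'a fps" where
  "fps_even f = Abs_fps (\<lambda>j. f $ (2 * j))"

definition fps_odd :: "'a fps \<Rightarrow> 'a fps" where
  "fps_odd f = Abs_fps (\<lambda>j. f $ (2 * j + 1))"

lemma fps_even_one_minus_X2_mult: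
  fixes f :: "'a :: comm_ring_1 fps"
  shows "fps_even ((1 - fps_X\<^sup>2) * f) = (1 - fps_X) * fps_even f"
proof (rule fps_ext)
  fix j
  have "(1 - fps_X\<^sup>2) * f = f - fps_X\<^sup>2 * f" and "(1 - fps_X) * fps_even f = fps_even f - fps_X * fps_even f"
    by (simp_all add: algebra_simps)
  then show "fps_even ((1 - fps_X\<^sup>2) * f) $ j = ((1 - fps_X) * fps_even f) $ j"
    by (cases j) (auto simp: fps_even_def fps_X_power_mult_nth)
qed

lemma fps_even_one_minus_X2_power_mult:
  fixes f :: "'a :: comm_ring_1 fps"
  shows "fps_even ((1 - fps_X\<^sup>2) ^ k * f) = (1 - fps_X) ^ k * fps_even f"
proof (induction k)
  case (Suc k)
  have "fps_even ((1 - fps_X\<^sup>2) ^ Suc k * f) = fps_even ((1 - fps_X\<^sup>2) * ((1 - fps_X\<^sup>2) ^ k * f))"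
    by (simp add: mult_ac)
  also have "\<dots> = (1 - fps_X) * ((1 - fps_X) ^ k * fps_even f)"
    by (simp only: fps_even_one_minus_X2_mult Suc.IH)
  finally show ?case
    by (simp add: mult_ac)
qed simp

lemma fps_even_odd_mult_one_plus_X_square:
  fixes f :: "'a :: comm_ring_1 fps"
  shows "fps_even (f * (1 + fps_X)\<^sup>2) = fps_even f * (1 + fps_X) + 2 * fps_X * fps_odd f"
    and "fps_odd (f * (1 + fps_X)\<^sup>2) = 2 * fps_even f + (1 + fps_X) * fps_odd f"
proof -
  have f: "f * (1 + fps_X)\<^sup>2 = f + 2 * (fps_X * f) + fps_X\<^sup>2 * f"
    by (simp add: algebra_simps power2_eq_square)
  have "fps_even (f * (1 + fps_X)\<^sup>2) = fps_even f + fps_X * fps_even f + 2 * (fps_X * fps_odd f)"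
    and "fps_odd (f * (1 + fps_X)\<^sup>2) = 2 * fps_even f + fps_odd f + fps_X * fps_odd f"
    unfolding f
    by (rule fps_ext, case_tac n; simp add: fps_even_def fps_odd_def fps_X_power_mult_nth numeral_fps_const)+
  then show "fps_even (f * (1 + fps_X)\<^sup>2) = fps_even f * (1 + fps_X) + 2 * fps_X * fps_odd f"
    and "fps_odd (f * (1 + fps_X)\<^sup>2) = 2 * fps_even f + (1 + fps_X) * fps_odd f"
    by (simp_all add: algebra_simps)
qed

lemma fps_of_poly_binom_poly_Suc:
  "fps_of_poly (even_binom_poly (Suc n))
     = fps_of_poly (even_binom_poly n) * (1 + fps_X) + 2 * fps_X * fps_of_poly (odd_binom_poly n)"
  "fps_of_poly (odd_binom_poly (Suc n))
     = 2 * fps_of_poly (even_binom_poly n) + (1 + fps_X) * fps_of_poly (odd_binom_poly n)"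
  by (simp_all add: fps_of_poly_add fps_of_poly_mult fps_of_poly_smult fps_of_poly_linear' numeral_fps_const
      mult_ac)

lemma fps_even_odd_binom:
  "fps_even ((1 + fps_X) ^ (2 * n)) = fps_of_poly (even_binom_poly n) \<and>
   fps_odd ((1 + fps_X) ^ (2 * n)) = fps_of_poly (odd_binom_poly n)"
proof (induction n)
  case 0
  have "fps_even 1 = 1" "fps_odd 1 = 0"
    by (auto intro!: fps_ext simp: fps_even_def fps_odd_def)
  then show ?case
    by simp
next
  case (Suc n)
  have "(1 + fps_X :: real fps) ^ (2 * Suc n) = (1 + fps_X) ^ (2 * n) * (1 + fps_X)\<^sup>2"
    by (simp add: power_add[symmetric])
  then show ?case
    using Suc.IH
    by (simp only: fps_of_poly_binom_poly_Suc fps_even_odd_mult_one_plus_X_square)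
qed

definition fps_partial_sums :: "'a :: comm_monoid_add fps \<Rightarrow> 'a fps" where
  "fps_partial_sums f = Abs_fps (\<lambda>k. \<Sum>i<k. f $ i)"

lemma one_minus_X_mult_fps_partial_sums:
  fixes f :: "'a :: comm_ring_1 fps"
  shows "(1 - fps_X) * fps_partial_sums f = fps_X * f"
proof (rule fps_ext)
  fix k
  have "(1 - fps_X) * fps_partial_sums f = fps_partial_sums f - fps_X * fps_partial_sums f"
    by (simp add: algebra_simps)
  then show "((1 - fps_X) * fps_partial_sums f) $ k = (fps_X * f) $ k"
    by (cases k) (auto simp: fps_partial_sums_def)
qed

definition l1_parity_fps :: "nat \<Rightarrow> real fps" where
  "l1_parity_fps n = Abs_fps (\<lambda>m. real (l1_parity_count n m))"

lemma l1_parity_fps_0: "l1_parity_fps 0 * (1 - fps_X\<^sup>2) = 1"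
proof (rule fps_ext)
  fix k
  have "l1_parity_fps 0 * (1 - fps_X\<^sup>2) = l1_parity_fps 0 - fps_X\<^sup>2 * l1_parity_fps 0"
    by (simp add: algebra_simps)
  then show "(l1_parity_fps 0 * (1 - fps_X\<^sup>2)) $ k = (1 :: real fps) $ k"
    by (cases "k < 2") (auto simp: l1_parity_fps_def l1_parity_count_0 fps_X_power_mult_nth less_2_cases_iff)
qed

lemma l1_parity_fps_Suc: "(1 - fps_X) * l1_parity_fps (Suc n) = (1 + fps_X) * l1_parity_fps n"
proof -
  have "l1_parity_fps (Suc n) = l1_parity_fps n + 2 * fps_partial_sums (l1_parity_fps n)"
    by (rule fps_ext)
      (simp add: l1_parity_fps_def fps_partial_sums_def l1_parity_count_Suc numeral_fps_const)
  then have "(1 - fps_X) * l1_parity_fps (Suc n)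
             = (1 - fps_X) * l1_parity_fps n + 2 * ((1 - fps_X) * fps_partial_sums (l1_parity_fps n))"
    by (simp add: algebra_simps)
  also have "\<dots> = (1 + fps_X) * l1_parity_fps n"
    unfolding one_minus_X_mult_fps_partial_sums by (simp add: algebra_simps)
  finally show ?thesis .
qed

lemma l1_parity_fps_closed: "l1_parity_fps n * (1 - fps_X) ^ n * (1 - fps_X\<^sup>2) = (1 + fps_X) ^ n"
proof (induction n)
  case 0
  then show ?case
    using l1_parity_fps_0 by simp
next
  case (Suc n)
  have "l1_parity_fps (Suc n) * (1 - fps_X) ^ Suc n * (1 - fps_X\<^sup>2)
        = ((1 - fps_X) * l1_parity_fps (Suc n)) * (1 - fps_X) ^ n * (1 - fps_X\<^sup>2)"
    by (simp add: mult_ac)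
  also have "\<dots> = (1 + fps_X) * (l1_parity_fps n * (1 - fps_X) ^ n * (1 - fps_X\<^sup>2))"
    by (simp add: l1_parity_fps_Suc mult_ac)
  finally show ?case
    by (simp add: Suc.IH)
qed

lemma fps_even_l1_parity_fps:
  "(1 - fps_X) ^ (n + 1) * fps_even (l1_parity_fps n) = fps_of_poly (even_binom_poly n)"
proof -
  have "(1 - fps_X\<^sup>2) ^ (n + 1) * l1_parity_fps n
        = (1 + fps_X) ^ n * (l1_parity_fps n * (1 - fps_X) ^ n * (1 - fps_X\<^sup>2))"
    by (simp add: power2_eq_square algebra_simps power_mult_distrib flip: power_mult_distrib)
  also have "\<dots> = (1 + fps_X) ^ (2 * n)"
    by (simp add: l1_parity_fps_closed mult_2 power_add)
  finally show ?thesis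
    using fps_even_one_minus_X2_power_mult[of "n + 1" "l1_parity_fps n"] fps_even_odd_binom[of n] by simp
qed

lemma fps_partial_sums_l1_parity_fps:
  "(1 - fps_X) ^ (n + 3) * fps_partial_sums (l1_parity_fps (Suc n)) = fps_X * (1 + fps_X) ^ n"
proof -
  have "((1 - fps_X) ^ (n + 2) * l1_parity_fps (Suc n)) * (1 + fps_X)
        = l1_parity_fps (Suc n) * (1 - fps_X) ^ Suc n * (1 - fps_X\<^sup>2)"
    by (simp add: power2_eq_square algebra_simps)
  also have "\<dots> = (1 + fps_X) ^ n * (1 + fps_X)"
    unfolding power_Suc2[symmetric] by (rule l1_parity_fps_closed)
  finally have closed: "(1 - fps_X) ^ (n + 2) * l1_parity_fps (Suc n) = (1 + fps_X) ^ n"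
    by (rule mult_right_cancel[THEN iffD1, rotated]) (auto simp: fps_eq_iff)
  have "(1 - fps_X) ^ (n + 3) * fps_partial_sums (l1_parity_fps (Suc n))
                 = (1 - fps_X) ^ (n + 2) * ((1 - fps_X) * fps_partial_sums (l1_parity_fps (Suc n)))"
    by (simp add: mult.assoc[symmetric] power_Suc2[symmetric] numeral_3_eq_3 numeral_2_eq_2)
  also have "\<dots> = fps_X * ((1 - fps_X) ^ (n + 2) * l1_parity_fps (Suc n))"
    unfolding one_minus_X_mult_fps_partial_sums by (simp add: mult_ac)
  finally show ?thesis
    unfolding closed .
qed

lemma D_ball_fps:
  "Abs_fps (\<lambda>k. real (card (D_ball (Suc n) k)))
   = fps_even (l1_parity_fps (Suc n)) - fps_const (2 * real (Suc n)) * fps_partial_sums (l1_parity_fps n)"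
proof (rule fps_ext)
  fix k
  have "real (l1_parity_count (Suc n) (2 * k))
        = real (card (D_ball (Suc n) k)) + 2 * real (Suc n) * (\<Sum>i<k. real (l1_parity_count n i))"
    unfolding l1_parity_count_eq_D_ball by (simp add: of_nat_sum algebra_simps)
  then show "Abs_fps (\<lambda>k. real (card (D_ball (Suc n) k))) $ k
             = (fps_even (l1_parity_fps (Suc n)) - fps_const (2 * real (Suc n)) * fps_partial_sums (l1_parity_fps n)) $ k"
    by (simp add: fps_even_def l1_parity_fps_def fps_partial_sums_def)
qed

lemma coord_seq_fps:
  fixes M :: "vec set"
  defines "B k \<equiv> {v \<in> gen_lattice M. word_length M v \<le> k}"
  assumes "\<And>k. finite (B k)"
  shows "Abs_fps (\<lambda>k. real (coord_seq M k)) = (1 - fps_X) * Abs_fps (\<lambda>k. real (card (B k)))"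
proof (rule fps_ext)
  fix k
  have "(1 - fps_X) * Abs_fps (\<lambda>k. real (card (B k)))
        = Abs_fps (\<lambda>k. real (card (B k))) - fps_X * Abs_fps (\<lambda>k. real (card (B k)))"
    by (simp add: algebra_simps)
  moreover have "coord_seq M 0 = card (B 0)"
    unfolding coord_seq_def B_def by simp
  moreover have "coord_seq M (Suc j) = card (B (Suc j)) - card (B j)" for j
  proof -
    have "{v \<in> gen_lattice M. word_length M v = Suc j} = B (Suc j) - B j" and "B j \<subseteq> B (Suc j)"
      by (auto simp: B_def)
    then show ?thesis
      unfolding coord_seq_def by (simp add: card_Diff_subset assms(2))
  qed
  moreover have "card (B j) \<le> card (B (Suc j))" for j
    by (rule card_mono[OF assms(2)]) (auto simp: B_def)
  ultimately show "Abs_fps (\<lambda>k. real (coord_seq M k)) $ k = ((1 - fps_X) * Abs_fps (\<lambda>k. real (card (B k)))) $ k"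
    by (cases k) (simp_all add: of_nat_diff)
qed

lemma hD_closed_coordinator_series:
  assumes "n \<ge> 2"
  shows "fps_of_poly (hD_closed n) = (1 - fps_X) ^ n * Abs_fps (\<lambda>k. real (coord_seq (M_D n) k))"
proof -
  obtain m where n: "n = Suc (Suc m)"
    using assms by (metis add_2_eq_Suc le_Suc_ex)
  have "(1 - fps_X) ^ n * Abs_fps (\<lambda>k. real (coord_seq (M_D n) k))
        = (1 - fps_X) ^ (n + 1) * Abs_fps (\<lambda>k. real (card (D_ball n k)))"
    using coord_seq_fps[of "M_D n"] word_length_ball_eq_D_ball[OF assms] finite_D_ball
    by (simp add: mult_ac)
  also have "\<dots> = (1 - fps_X) ^ (n + 1) * fps_even (l1_parity_fps n)
                  - fps_const (2 * real n) * ((1 - fps_X) ^ (m + 3) * fps_partial_sums (l1_parity_fps (Suc m)))"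
    unfolding n D_ball_fps by (simp add: algebra_simps numeral_3_eq_3)
  also have "\<dots> = fps_of_poly (hD_closed n)"
    unfolding fps_even_l1_parity_fps fps_partial_sums_l1_parity_fps
    by (simp add: n hD_closed_def fps_of_poly_diff fps_of_poly_smult fps_of_poly_mult fps_of_poly_power
        fps_of_poly_linear' mult_ac)
  finally show ?thesis ..
qed

theorem theorem2p1:
  fixes n :: nat
  assumes "n \<ge> 2"
  shows "fps_of_poly (h_D n) = (1 - fps_X) ^ n * Abs_fps (\<lambda>k. real (coord_seq (M_D n) k))
         \<and> real_rooted (h_D n)"
proof -
  have "h_D n = hD_closed n"
    unfolding h_D_def coordinator_poly_def
  proof (rule the1_equality)
    show "\<exists>!h. fps_of_poly h = (1 - fps_X) ^ n * Abs_fps (\<lambda>k. real (coord_seq (M_D n) k))"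
      using hD_closed_coordinator_series[OF assms] by (metis fps_of_poly_eq_iff)
  qed (rule hD_closed_coordinator_series[OF assms])
  then show ?thesis
    using hD_closed_coordinator_series[OF assms] hD_closed_real_rooted[OF assms] by simp
qed

end
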